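(* Let $U,W$ be Hilbert spaces, $T: U\rightrightarrows U$, $(\hat u,\hat w)\in\operatorname{graph}T$, $\Xi,N,M\in\mathcal{L}(U;U)$ with $M\ge0$, and $\alpha>0$. Suppose: (i) $N=A^*B$ for some $A,B\in\mathcal{L}(U;W)$; (ii) $\Xi_\alpha:=\alpha^{-1}\Xi-\alpha^{-2}A^*A/4 \le \min\{1,\alpha^{-1}\}M$; (iii) $(M,M-\Xi_\alpha)\in\mathcal{P}(T^{-1}(\hat w),\hat u)$ when $\alpha\in(0,1)$. Then $T$ is $(\Xi_\alpha, B^*B, M)$-partially subregular at $(\hat u,\hat w)$ if it is $(\Xi,N,M)$-partially strongly submonotone at this point. If (iii) does not hold (but (i) and (ii) do), $(\Xi,N,M)$-partial strong submonotonicity at $(\hat u,\hat w)$ still implies $(\alpha\Xi_\alpha,\alpha B^*B,M)$-partial subregularity there.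
   Context: For $T\in\mathcal{L}(U;U)$: $\langle x,z\rangle_T:=\langle Tx,z\rangle$, $\|x\|^2_T:=\langle Tx,x\rangle$, $\operatorname{dist}^2_T(z,A):=\inf_{u\in A}\|z-u\|^2_T$ ($\inf\emptyset=+\infty$); $T\ge S$ means $T-S$ positive semidefinite. Partial strong submonotonicity: for $\Xi,N,M$ with $M\ge0$, $T$ is $(\Xi,N,M)$-partially strongly submonotone at $(\hat u,\hat w)$ if there is a neighbourhood $\mathcal{U}\ni\hat u$ with $\inf_{u^*\in T^{-1}(\hat w)}(\langle w-\hat w,u-u^*\rangle_N+\|u-u^*\|^2_{M-\Xi})\ge\operatorname{dist}^2_M(u,T^{-1}(\hat w))$ for all $u\in\mathcal{U}$, $w\in T(u)$. Partial subregularity: for $M,P,N$ with $N\ge0$, $M\ge0$, $M\ge P$, $T$ is $(P,N,M)$-partially subregular at $(\hat u,\hat w)$ if there is a neighbourhood $\mathcal{U}\ni\hat u$ with $\operatorname{dist}^2_N(\hat w,T(u))+\operatorname{dist}^2_{M-P}(u,T^{-1}(\hat w))\ge\operatorname{dist}^2_M(u,T^{-1}(\hat w))$ for all $u\in\mathcal{U}$. $(M,M')\in\mathcal{P}(A,\hat u)$ means there is a neighbourhood $\mathcal{U}'\ni\hat u$ such that each $u\in\mathcal{U}'$ has a common projection onto $A$ with respect to $\|\cdot\|_M$ and $\|\cdot\|_{M'}$. *)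

theory Defs
  imports "HOL-Analysis.Analysis"
begin

text \<open>Operators T in L(U;U) are represented as bounded linear functions.
  Weighted inner product, squared seminorm and squared distance.\<close>

definition wip :: "('u::real_inner \<Rightarrow> 'u) \<Rightarrow> 'u \<Rightarrow> 'u \<Rightarrow> real" where
  "wip T x z = inner (T x) z"

definition wnorm2 :: "('u::real_inner \<Rightarrow> 'u) \<Rightarrow> 'u \<Rightarrow> real" where
  "wnorm2 T x = inner (T x) x"

text \<open>Squared distance with values in ereal, so that the infimum over the empty set is +infinity.\<close>
definition wdist2 :: "('u::real_inner \<Rightarrow> 'u) \<Rightarrow> 'u \<Rightarrow> 'u set \<Rightarrow> ereal" where
  "wdist2 T z A = (INF u\<in>A. ereal (wnorm2 T (z - u)))"

definition psd :: "('u::real_inner \<Rightarrow> 'u) \<Rightarrow> bool" where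
  "psd T \<longleftrightarrow> (\<forall>x. 0 \<le> inner (T x) x)"

definition op_ge :: "('u::real_inner \<Rightarrow> 'u) \<Rightarrow> ('u \<Rightarrow> 'u) \<Rightarrow> bool" where
  "op_ge T S \<longleftrightarrow> psd (\<lambda>x. T x - S x)"

definition op_diff :: "('u::real_inner \<Rightarrow> 'u) \<Rightarrow> ('u \<Rightarrow> 'u) \<Rightarrow> ('u \<Rightarrow> 'u)" where
  "op_diff T S = (\<lambda>x. T x - S x)"

definition is_adjoint :: "('u::real_inner \<Rightarrow> 'w::real_inner) \<Rightarrow> ('w \<Rightarrow> 'u) \<Rightarrow> bool" where
  "is_adjoint A As \<longleftrightarrow> (\<forall>x w. inner (A x) w = inner x (As w))"

definition inv_img :: "('u \<Rightarrow> 'v set) \<Rightarrow> 'v \<Rightarrow> 'u set" where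
  "inv_img T w = {u. w \<in> T u}"

definition partially_strongly_submonotone ::
  "('u::real_inner \<Rightarrow> 'u set) \<Rightarrow> ('u \<Rightarrow> 'u) \<Rightarrow> ('u \<Rightarrow> 'u) \<Rightarrow> ('u \<Rightarrow> 'u) \<Rightarrow> 'u \<Rightarrow> 'u \<Rightarrow> bool" where
  "partially_strongly_submonotone T Xi N M uh wh \<longleftrightarrow>
     psd M \<and>
     (\<exists>UU. open UU \<and> uh \<in> UU \<and>
        (\<forall>u\<in>UU. \<forall>w\<in>T u.
           (INF us\<in>inv_img T wh. ereal (wip N (w - wh) (u - us) + wnorm2 (op_diff M Xi) (u - us)))
             \<ge> wdist2 M u (inv_img T wh)))"

definition partially_subregular ::
  "('u::real_inner \<Rightarrow> 'u set) \<Rightarrow> ('u \<Rightarrow> 'u) \<Rightarrow> ('u \<Rightarrow> 'u) \<Rightarrow> ('u \<Rightarrow> 'u) \<Rightarrow> 'u \<Rightarrow> 'u \<Rightarrow> bool" where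
  "partially_subregular T P N M uh wh \<longleftrightarrow>
     psd N \<and> psd M \<and> op_ge M P \<and>
     (\<exists>UU. open UU \<and> uh \<in> UU \<and>
        (\<forall>u\<in>UU. wdist2 N wh (T u) + wdist2 (op_diff M P) u (inv_img T wh)
                  \<ge> wdist2 M u (inv_img T wh)))"

definition is_wproj :: "('u::real_inner \<Rightarrow> 'u) \<Rightarrow> 'u set \<Rightarrow> 'u \<Rightarrow> 'u \<Rightarrow> bool" where
  "is_wproj M A u p \<longleftrightarrow> p \<in> A \<and> (\<forall>a\<in>A. wnorm2 M (u - p) \<le> wnorm2 M (u - a))"

definition common_proj :: "('u::real_inner \<Rightarrow> 'u) \<Rightarrow> ('u \<Rightarrow> 'u) \<Rightarrow> 'u set \<Rightarrow> 'u \<Rightarrow> bool" where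
  "common_proj M M' A uh \<longleftrightarrow>
     (\<exists>UU. open UU \<and> uh \<in> UU \<and> (\<forall>u\<in>UU. \<exists>p. is_wproj M A u p \<and> is_wproj M' A u p))"

end

theory Submission
  imports Defs
begin

text \<open>Since \<open>N = A\<^sup>*B\<close>, the cross term of partial strong submonotonicity is
  \<open>\<langle>B(w - w\<^sub>0), A(u - u\<^sup>*)\<rangle>\<close>, and Young's inequality bounds it by
  \<open>\<alpha>\<parallel>B(w - w\<^sub>0)\<parallel>\<^sup>2 + \<parallel>A(u - u\<^sup>*)\<parallel>\<^sup>2/(4\<alpha>)\<close>. This gives, for every \<open>u\<^sup>* \<in> T\<^sup>-\<^sup>1(w\<^sub>0)\<close>,
  \<open>dist\<^sub>M\<^sup>2(u, T\<^sup>-\<^sup>1(w\<^sub>0)) \<le> \<alpha>\<parallel>w - w\<^sub>0\<parallel>\<^sub>B\<^sub>*\<^sub>B\<^sup>2 + \<parallel>u - u\<^sup>*\<parallel>\<^sub>M\<^sup>2 - \<alpha>\<parallel>u - u\<^sup>*\<parallel>\<^sub>\<Xi>\<^sub>\<alpha>\<^sup>2\<close>,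
  and taking infima over \<open>w\<close> and \<open>u\<^sup>*\<close> yields the scaled subregularity. To remove
  the factor \<open>\<alpha>\<close>: for \<open>\<alpha> \<ge> 1\<close> interpolate with the trivial bound
  \<open>dist\<^sub>M\<^sup>2 \<le> \<parallel>u - u\<^sup>*\<parallel>\<^sub>M\<^sup>2\<close>; for \<open>\<alpha> < 1\<close> evaluate at a common projection \<open>p\<close>,
  where \<open>dist\<^sub>M\<^sup>2 = \<parallel>u - p\<parallel>\<^sub>M\<^sup>2\<close> forces \<open>\<parallel>u - p\<parallel>\<^sub>\<Xi>\<^sub>\<alpha>\<^sup>2 \<le> \<parallel>w - w\<^sub>0\<parallel>\<^sub>B\<^sub>*\<^sub>B\<^sup>2\<close>.\<close>

definition xi_alpha ::
    "real \<Rightarrow> ('u::real_vector \<Rightarrow> 'u) \<Rightarrow> ('u \<Rightarrow> 'w) \<Rightarrow> ('w \<Rightarrow> 'u) \<Rightarrow> 'u \<Rightarrow> 'u" where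
  "xi_alpha \<alpha> Xi A As = (\<lambda>x. (1 / \<alpha>) *\<^sub>R Xi x - (1 / (4 * \<alpha>\<^sup>2)) *\<^sub>R As (A x))"

lemma ereal_le_INF_add:
  fixes F :: "'a \<Rightarrow> ereal"
  assumes le: "\<And>x. x \<in> X \<Longrightarrow> D \<le> F x + Z" and Z: "0 \<le> Z"
    and F: "\<And>x. x \<in> X \<Longrightarrow> 0 \<le> F x"
  shows "D \<le> (INF x\<in>X. F x) + Z"
proof (cases "X = {}")
  case True
  then show ?thesis using Z by (cases Z) (auto simp: top_ereal_def)
next
  case False
  have "D \<le> (INF x\<in>X. F x + Z)" by (rule INF_greatest) (rule le)
  also have "\<dots> = (INF x\<in>X. F x) + Z"
    using Z by (intro INF_ereal_add_left[OF False _ F]) auto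
  finally show ?thesis .
qed

lemma inner_le_young:
  fixes a b :: "'a::real_inner"
  assumes "\<alpha> > 0"
  shows "inner b a \<le> \<alpha> * inner b b + inner a a / (4 * \<alpha>)"
proof -
  have "0 \<le> inner ((2 * \<alpha>) *\<^sub>R b - a) ((2 * \<alpha>) *\<^sub>R b - a)" by simp
  also have "\<dots> = 4 * \<alpha>\<^sup>2 * inner b b - 4 * \<alpha> * inner b a + inner a a"
    by (simp add: inner_diff_left inner_diff_right inner_commute power2_eq_square algebra_simps)
  finally have "4 * \<alpha> * inner b a \<le> 4 * \<alpha> * (\<alpha> * inner b b + inner a a / (4 * \<alpha>))"
    using assms by (simp add: algebra_simps power2_eq_square)
  then show ?thesis using assms by simp
qed

lemma ereal_le_interpolate:
  fixes d :: ereal and \<alpha> a m x :: real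
  assumes \<alpha>: "1 \<le> \<alpha>" and scaled: "d \<le> ereal (\<alpha> * a + (m - \<alpha> * x))" and trivial: "d \<le> ereal m"
  shows "d \<le> ereal (a + (m - x))"
proof (cases d)
  case (real r)
  have "(\<alpha> - 1) * r \<le> (\<alpha> - 1) * m" using \<alpha> trivial real by (simp add: mult_left_mono)
  then have "\<alpha> * r \<le> \<alpha> * (a + (m - x))" using scaled real by (simp add: algebra_simps)
  then show ?thesis using \<alpha> real by simp
qed (use trivial in auto)

lemma wnorm2_op_diff: "wnorm2 (op_diff M P) v = wnorm2 M v - wnorm2 P v"
  by (simp add: wnorm2_def op_diff_def inner_diff_left)

lemma wnorm2_scaleR: "wnorm2 (\<lambda>x. c *\<^sub>R P x) v = c * wnorm2 P v"
  by (simp add: wnorm2_def)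

lemma psd_iff_wnorm2: "psd P \<longleftrightarrow> (\<forall>v. 0 \<le> wnorm2 P v)"
  by (simp add: psd_def wnorm2_def)

lemma op_ge_iff_wnorm2: "op_ge M P \<longleftrightarrow> (\<forall>v. wnorm2 P v \<le> wnorm2 M v)"
  by (simp add: op_ge_def psd_def wnorm2_def inner_diff_left)

lemma psd_op_diff: "op_ge M P \<Longrightarrow> psd (op_diff M P)"
  by (simp add: op_ge_def op_diff_def)

lemma wnorm2_adjoint_comp:
  "is_adjoint A As \<Longrightarrow> wnorm2 (\<lambda>x. As (A x)) v = inner (A v) (A v)"
  by (simp add: is_adjoint_def wnorm2_def inner_commute)

lemma wip_adjoint_comp:
  "is_adjoint A As \<Longrightarrow> wip (\<lambda>x. As (B x)) x v = inner (B x) (A v)"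
  unfolding is_adjoint_def wip_def by (metis inner_commute)

lemma wnorm2_xi_alpha:
  assumes "is_adjoint A As" "\<alpha> > 0"
  shows "\<alpha> * wnorm2 (xi_alpha \<alpha> Xi A As) v = wnorm2 Xi v - inner (A v) (A v) / (4 * \<alpha>)"
proof -
  have "inner (As (A v)) v = inner (A v) (A v)"
    using wnorm2_adjoint_comp[OF assms(1)] by (simp add: wnorm2_def)
  then show ?thesis
    using assms(2) by (simp add: xi_alpha_def wnorm2_def inner_diff_left field_simps power2_eq_square)
qed

lemma op_ge_min_scaleR:
  assumes ge: "op_ge (\<lambda>x. min 1 (1 / \<alpha>) *\<^sub>R M x) P" and "psd M" and \<alpha>: "\<alpha> > 0"
  shows "op_ge M P" and "op_ge M (\<lambda>x. \<alpha> *\<^sub>R P x)"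
proof -
  have PM: "wnorm2 P v \<le> min 1 (1 / \<alpha>) * wnorm2 M v" for v
    using ge by (simp add: op_ge_iff_wnorm2 wnorm2_scaleR)
  have M0: "0 \<le> wnorm2 M v" for v using \<open>psd M\<close> by (simp add: psd_iff_wnorm2)
  show "op_ge M P"
    unfolding op_ge_iff_wnorm2
  proof
    fix v
    have "min 1 (1 / \<alpha>) * wnorm2 M v \<le> 1 * wnorm2 M v"
      by (rule mult_right_mono) (simp_all add: M0)
    then show "wnorm2 P v \<le> wnorm2 M v" using PM[of v] by simp
  qed
  show "op_ge M (\<lambda>x. \<alpha> *\<^sub>R P x)"
    unfolding op_ge_iff_wnorm2 wnorm2_scaleR
  proof
    fix v
    have "min 1 (1 / \<alpha>) * wnorm2 M v \<le> (1 / \<alpha>) * wnorm2 M v"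
      by (rule mult_right_mono) (simp_all add: M0)
    then have "\<alpha> * wnorm2 P v \<le> \<alpha> * ((1 / \<alpha>) * wnorm2 M v)"
      using PM[of v] \<alpha> by (intro mult_left_mono) auto
    then show "\<alpha> * wnorm2 P v \<le> wnorm2 M v" using \<alpha> by simp
  qed
qed

lemma wdist2_nonneg: "psd Q \<Longrightarrow> 0 \<le> wdist2 Q u S"
  unfolding wdist2_def psd_def wnorm2_def by (rule INF_greatest) simp

lemma wdist2_le_wnorm2: "s \<in> S \<Longrightarrow> wdist2 Q u S \<le> ereal (wnorm2 Q (u - s))"
  unfolding wdist2_def by (rule INF_lower)

lemma wdist2_wproj: "is_wproj Q S u p \<Longrightarrow> wdist2 Q u S = ereal (wnorm2 Q (u - p))"
  unfolding is_wproj_def wdist2_def by (intro antisym INF_lower INF_greatest) auto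

lemma le_add_wdist2I:
  assumes "\<And>s. s \<in> S \<Longrightarrow> D \<le> ereal (c + wnorm2 Q (u - s))" and "0 \<le> c" and "psd Q"
  shows "D \<le> ereal c + wdist2 Q u S"
proof -
  have "D \<le> (INF s\<in>S. ereal (wnorm2 Q (u - s))) + ereal c"
    using assms by (intro ereal_le_INF_add) (auto simp: add.commute psd_iff_wnorm2)
  then show ?thesis by (simp add: wdist2_def add.commute)
qed

lemma partially_subregularI:
  assumes "psd N" "psd M" "op_ge M P" "open U" "uh \<in> U"
    and le: "\<And>u w. u \<in> U \<Longrightarrow> w \<in> T u \<Longrightarrow>
      wdist2 M u (inv_img T wh) \<le> ereal (wnorm2 N (wh - w)) + wdist2 (op_diff M P) u (inv_img T wh)"
  shows "partially_subregular T P N M uh wh"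
  unfolding partially_subregular_def
proof (intro conjI assms exI[of _ U] ballI)
  fix u assume "u \<in> U"
  have "wdist2 M u (inv_img T wh) \<le>
      (INF w\<in>T u. ereal (wnorm2 N (wh - w))) + wdist2 (op_diff M P) u (inv_img T wh)"
    using le[OF \<open>u \<in> U\<close>] assms(1,3)
    by (intro ereal_le_INF_add wdist2_nonneg psd_op_diff) (auto simp: psd_iff_wnorm2)
  then show "wdist2 N wh (T u) + wdist2 (op_diff M P) u (inv_img T wh) \<ge> wdist2 M u (inv_img T wh)"
    by (simp add: wdist2_def)
qed

definition young_bound ::
    "('u::real_inner \<Rightarrow> 'u set) \<Rightarrow> real \<Rightarrow> ('u \<Rightarrow> 'u) \<Rightarrow> ('u \<Rightarrow> 'u) \<Rightarrow> ('u \<Rightarrow> 'u)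
      \<Rightarrow> 'u \<Rightarrow> 'u \<Rightarrow> bool" where
  "young_bound T \<alpha> P N M uh wh \<longleftrightarrow>
     (\<exists>U. open U \<and> uh \<in> U \<and>
        (\<forall>u\<in>U. \<forall>w\<in>T u. \<forall>s\<in>inv_img T wh.
           wdist2 M u (inv_img T wh)
             \<le> ereal (\<alpha> * wnorm2 N (wh - w) + (wnorm2 M (u - s) - \<alpha> * wnorm2 P (u - s)))))"

lemma partially_strongly_submonotone_young_bound:
  assumes pssm: "partially_strongly_submonotone T Xi (\<lambda>x. As (B x)) M uh wh"
    and adj: "is_adjoint A As" "is_adjoint B Bs" and "linear B" and \<alpha>: "\<alpha> > 0"
  shows "young_bound T \<alpha> (xi_alpha \<alpha> Xi A As) (\<lambda>x. Bs (B x)) M uh wh"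
proof -
  let ?S = "inv_img T wh"
  obtain U where U: "open U" "uh \<in> U" and submon: "\<And>u w. u \<in> U \<Longrightarrow> w \<in> T u \<Longrightarrow>
      wdist2 M u ?S \<le> (INF s\<in>?S. ereal (wip (\<lambda>x. As (B x)) (w - wh) (u - s)
                                          + wnorm2 (op_diff M Xi) (u - s)))"
    using pssm unfolding partially_strongly_submonotone_def by blast
  have "wdist2 M u ?S \<le> ereal (\<alpha> * wnorm2 (\<lambda>x. Bs (B x)) (wh - w)
          + (wnorm2 M (u - s) - \<alpha> * wnorm2 (xi_alpha \<alpha> Xi A As) (u - s)))"
    if "u \<in> U" "w \<in> T u" "s \<in> ?S" for u w s
  proof -
    have "B (wh - w) = - B (w - wh)"
      using linear_diff[OF \<open>linear B\<close>] by (metis minus_diff_eq)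
    then have "wnorm2 (\<lambda>x. Bs (B x)) (wh - w) = inner (B (w - wh)) (B (w - wh))"
      using wnorm2_adjoint_comp[OF adj(2)] by simp
    then have "wip (\<lambda>x. As (B x)) (w - wh) (u - s) + wnorm2 (op_diff M Xi) (u - s)
        \<le> \<alpha> * wnorm2 (\<lambda>x. Bs (B x)) (wh - w)
          + (wnorm2 M (u - s) - \<alpha> * wnorm2 (xi_alpha \<alpha> Xi A As) (u - s))"
      using inner_le_young[OF \<alpha>, of "B (w - wh)" "A (u - s)"]
      by (simp add: wip_adjoint_comp[OF adj(1)] wnorm2_xi_alpha[OF adj(1) \<alpha>] wnorm2_op_diff)
    then show ?thesis
      using submon[OF that(1,2)] INF_lower[OF that(3)] by (meson ereal_less_eq(3) order_trans)
  qed
  then show ?thesis using U unfolding young_bound_def by blast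
qed

lemma young_boundE:
  assumes "young_bound T \<alpha> P N M uh wh"
  obtains U where "open U" "uh \<in> U"
    and "\<And>u w s. u \<in> U \<Longrightarrow> w \<in> T u \<Longrightarrow> s \<in> inv_img T wh \<Longrightarrow>
      wdist2 M u (inv_img T wh) \<le> ereal (\<alpha> * wnorm2 N (wh - w) + (wnorm2 M (u - s) - \<alpha> * wnorm2 P (u - s)))"
  using assms unfolding young_bound_def by metis

lemma partially_subregular_scaled:
  assumes "young_bound T \<alpha> P N M uh wh" "\<alpha> > 0" "psd N" "psd M" "op_ge M (\<lambda>x. \<alpha> *\<^sub>R P x)"
  shows "partially_subregular T (\<lambda>x. \<alpha> *\<^sub>R P x) (\<lambda>x. \<alpha> *\<^sub>R N x) M uh wh"
proof -
  obtain U where U: "open U" "uh \<in> U" and bound: "\<And>u w s. u \<in> U \<Longrightarrow> w \<in> T u \<Longrightarrow>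
      s \<in> inv_img T wh \<Longrightarrow> wdist2 M u (inv_img T wh)
        \<le> ereal (\<alpha> * wnorm2 N (wh - w) + (wnorm2 M (u - s) - \<alpha> * wnorm2 P (u - s)))"
    using assms(1) by (elim young_boundE) blast
  have N: "psd (\<lambda>x. \<alpha> *\<^sub>R N x)"
    using assms(2,3) by (simp add: psd_iff_wnorm2 wnorm2_scaleR)
  show ?thesis
  proof (rule partially_subregularI[OF N assms(4,5) U])
    fix u w assume "u \<in> U" "w \<in> T u"
    show "wdist2 M u (inv_img T wh) \<le> ereal (wnorm2 (\<lambda>x. \<alpha> *\<^sub>R N x) (wh - w))
        + wdist2 (op_diff M (\<lambda>x. \<alpha> *\<^sub>R P x)) u (inv_img T wh)"
    proof (rule le_add_wdist2I)
      fix s assume "s \<in> inv_img T wh"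
      then show "wdist2 M u (inv_img T wh) \<le> ereal (wnorm2 (\<lambda>x. \<alpha> *\<^sub>R N x) (wh - w)
          + wnorm2 (op_diff M (\<lambda>x. \<alpha> *\<^sub>R P x)) (u - s))"
        using bound[OF \<open>u \<in> U\<close> \<open>w \<in> T u\<close>] by (simp add: wnorm2_scaleR wnorm2_op_diff)
    next
      show "0 \<le> wnorm2 (\<lambda>x. \<alpha> *\<^sub>R N x) (wh - w)" using N by (simp add: psd_iff_wnorm2)
    qed (rule psd_op_diff[OF assms(5)])
  qed
qed

lemma partially_subregular_of_ge_1:
  assumes "young_bound T \<alpha> P N M uh wh" "1 \<le> \<alpha>" "psd N" "psd M" "op_ge M P"
  shows "partially_subregular T P N M uh wh"
proof -
  obtain U where U: "open U" "uh \<in> U" and bound: "\<And>u w s. u \<in> U \<Longrightarrow> w \<in> T u \<Longrightarrow>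
      s \<in> inv_img T wh \<Longrightarrow> wdist2 M u (inv_img T wh)
        \<le> ereal (\<alpha> * wnorm2 N (wh - w) + (wnorm2 M (u - s) - \<alpha> * wnorm2 P (u - s)))"
    using assms(1) by (elim young_boundE) blast
  show ?thesis
  proof (rule partially_subregularI[OF assms(3-5) U])
    fix u w assume "u \<in> U" "w \<in> T u"
    show "wdist2 M u (inv_img T wh) \<le> ereal (wnorm2 N (wh - w))
        + wdist2 (op_diff M P) u (inv_img T wh)"
    proof (rule le_add_wdist2I)
      fix s assume s: "s \<in> inv_img T wh"
      have "wdist2 M u (inv_img T wh) \<le> ereal (wnorm2 N (wh - w) + (wnorm2 M (u - s) - wnorm2 P (u - s)))"
        using assms(2) bound[OF \<open>u \<in> U\<close> \<open>w \<in> T u\<close> s] wdist2_le_wnorm2[OF s]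
        by (rule ereal_le_interpolate)
      then show "wdist2 M u (inv_img T wh) \<le> ereal (wnorm2 N (wh - w) + wnorm2 (op_diff M P) (u - s))"
        by (simp add: wnorm2_op_diff)
    next
      show "0 \<le> wnorm2 N (wh - w)" using assms(3) by (simp add: psd_iff_wnorm2)
    qed (rule psd_op_diff[OF assms(5)])
  qed
qed

lemma partially_subregular_of_common_proj:
  assumes "young_bound T \<alpha> P N M uh wh" "\<alpha> > 0" "psd N" "psd M" "op_ge M P"
    and "common_proj M (op_diff M P) (inv_img T wh) uh"
  shows "partially_subregular T P N M uh wh"
proof -
  let ?S = "inv_img T wh"
  obtain U where U: "open U" "uh \<in> U" and bound: "\<And>u w s. u \<in> U \<Longrightarrow> w \<in> T u \<Longrightarrow>
      s \<in> ?S \<Longrightarrow> wdist2 M u ?S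
        \<le> ereal (\<alpha> * wnorm2 N (wh - w) + (wnorm2 M (u - s) - \<alpha> * wnorm2 P (u - s)))"
    using assms(1) by (elim young_boundE) blast
  obtain U' where U': "open U'" "uh \<in> U'"
    and proj: "\<And>u. u \<in> U' \<Longrightarrow> \<exists>p. is_wproj M ?S u p \<and> is_wproj (op_diff M P) ?S u p"
    using assms(6) unfolding common_proj_def by blast
  show ?thesis
  proof (rule partially_subregularI[OF assms(3-5), of "U \<inter> U'"])
    show "open (U \<inter> U')" "uh \<in> U \<inter> U'" using U U' by auto
    fix u w assume u: "u \<in> U \<inter> U'" and w: "w \<in> T u"
    then obtain p where pM: "is_wproj M ?S u p" and pMP: "is_wproj (op_diff M P) ?S u p"
      using proj by blast
    have "p \<in> ?S" using pM by (simp add: is_wproj_def)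
    then have "wnorm2 M (u - p) \<le> \<alpha> * wnorm2 N (wh - w) + (wnorm2 M (u - p) - \<alpha> * wnorm2 P (u - p))"
      using bound[of u w p] u w by (simp add: wdist2_wproj[OF pM])
    then have "wnorm2 P (u - p) \<le> wnorm2 N (wh - w)"
      using assms(2) by simp
    then show "wdist2 M u ?S \<le> ereal (wnorm2 N (wh - w)) + wdist2 (op_diff M P) u ?S"
      by (simp add: wdist2_wproj[OF pM] wdist2_wproj[OF pMP] wnorm2_op_diff)
  qed
qed

theorem lemma4p9:
  fixes T :: "'u::{real_inner,complete_space} \<Rightarrow> 'u set"
    and uh wh :: 'u
    and Xi N M :: "'u \<Rightarrow> 'u"
    and A B :: "'u \<Rightarrow> 'w::{real_inner,complete_space}"
    and As Bs :: "'w \<Rightarrow> 'u"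
    and \<alpha> :: real
  assumes graph: "wh \<in> T uh"
    and lin: "bounded_linear Xi" "bounded_linear N" "bounded_linear M"
    and linAB: "bounded_linear A" "bounded_linear B"
    and adjA: "is_adjoint A As" and adjB: "is_adjoint B Bs"
    and Mpos: "psd M"
    and alpha: "\<alpha> > 0"
    and i: "N = (\<lambda>x. As (B x))"
    and ii: "op_ge (\<lambda>x. min 1 (1 / \<alpha>) *\<^sub>R M x)
                   (\<lambda>x. (1 / \<alpha>) *\<^sub>R Xi x - (1 / (4 * \<alpha>\<^sup>2)) *\<^sub>R As (A x))"
    and pssm: "partially_strongly_submonotone T Xi N M uh wh"
  shows "((\<alpha> < 1 \<longrightarrow>
            common_proj M (op_diff M (\<lambda>x. (1 / \<alpha>) *\<^sub>R Xi x - (1 / (4 * \<alpha>\<^sup>2)) *\<^sub>R As (A x)))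
                        (inv_img T wh) uh)
          \<longrightarrow> partially_subregular T
                (\<lambda>x. (1 / \<alpha>) *\<^sub>R Xi x - (1 / (4 * \<alpha>\<^sup>2)) *\<^sub>R As (A x))
                (\<lambda>x. Bs (B x)) M uh wh)
       \<and> partially_subregular T
                (\<lambda>x. \<alpha> *\<^sub>R ((1 / \<alpha>) *\<^sub>R Xi x - (1 / (4 * \<alpha>\<^sup>2)) *\<^sub>R As (A x)))
                (\<lambda>x. \<alpha> *\<^sub>R Bs (B x)) M uh wh"
proof -
  let ?P = "xi_alpha \<alpha> Xi A As"
  have bound: "young_bound T \<alpha> ?P (\<lambda>x. Bs (B x)) M uh wh"
    using pssm[unfolded i] adjA adjB bounded_linear.linear[OF linAB(2)] alpha
    by (rule partially_strongly_submonotone_young_bound)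
  have geP: "op_ge M ?P" and geP_scaled: "op_ge M (\<lambda>x. \<alpha> *\<^sub>R ?P x)"
    using op_ge_min_scaleR[OF ii[folded xi_alpha_def] Mpos alpha] by blast+
  have Bpsd: "psd (\<lambda>x. Bs (B x))"
    using adjB by (simp add: psd_iff_wnorm2 wnorm2_adjoint_comp)
  have unscaled: "partially_subregular T ?P (\<lambda>x. Bs (B x)) M uh wh"
    if "\<alpha> < 1 \<longrightarrow> common_proj M (op_diff M ?P) (inv_img T wh) uh"
  proof (cases "\<alpha> < 1")
    case True
    with that show ?thesis
      by (intro partially_subregular_of_common_proj[OF bound alpha Bpsd Mpos geP]) simp
  next
    case False
    then show ?thesis by (intro partially_subregular_of_ge_1[OF bound _ Bpsd Mpos geP]) simp
  qed
  show ?thesis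
    using unscaled partially_subregular_scaled[OF bound alpha Bpsd Mpos geP_scaled]
    unfolding xi_alpha_def by blast
qed

end
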